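(* Let $(S,|\cdot|)$ be a finite metric space with $n\ge3$ points, $t\ge 1$, $G'=(S,E')$ a $t$-spanner for $S$, and $G=(S,E)$ the graph obtained from $G'$ by the construction in the context with $f=1$. Let $F\subseteq E$ be a matching in $G$ (i.e., $(S,F)$ has maximum degree at most $1$). Let $p,q\in S$ and let $P'$ be a shortest path between $p$ and $q$ in $G'$. Suppose that at least one edge of $P'$ belongs to $F$ and that $P'$ has at least two edges. Then $G\setminus F$ contains a walk between $p$ and $q$ whose length is at most $3|P'|$, where $|P'|$ is the sum of the weights of the edges of $P'$.
   Context: For a finite metric space $(S,|\cdot|)$, $K_S$ denotes the complete graph on $S$ with edge weights $|pq|$; all graphs on $S$ have edge weights $|pq|$. For a set $F$ of edges, $X\setminus F$ is the graph with the same vertex set as $X$ and edge set $E_X\setminus F$. A graph $G'=(S,E')$ is a $t$-spanner for $S$ if the shortest-path distance in $G'$ satisfies $\delta_{G'}(p,q)\le t|pq|$ for all $p,q$. The length of a walk is the sum of its edge weights. Construction (general $f$ with $1\le f\le (n-1)/2$): for each edge $\{a,b\}\in E'$, list the points of $S\setminus\{a,b\}$ as $c_1,\dots,c_{n-2}$ in non-decreasing order of $|ac_i|+|c_ib|$ (ties broken arbitrarily) and let $C_{ab}=\{c_1,\dots,c_{2f-1}\}$; then $G=(S,E)$ with $E=E'\cup\{\{a,c\},\{c,b\}:\{a,b\}\in E',\ c\in C_{ab}\}$. For $f=1$, $C_{ab}$ consists of a single point minimizing $|ac|+|cb|$ over $c\in S\setminus\{a,b\}$. *)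

theory Defs
  imports Main "HOL-Library.Extended_Real"
begin

definition metric_on :: "'a set \<Rightarrow> ('a \<Rightarrow> 'a \<Rightarrow> real) \<Rightarrow> bool" where
  "metric_on S d \<longleftrightarrow>
     (\<forall>x\<in>S. \<forall>y\<in>S. d x y \<ge> 0 \<and> (d x y = 0 \<longleftrightarrow> x = y) \<and> d x y = d y x) \<and>
     (\<forall>x\<in>S. \<forall>y\<in>S. \<forall>z\<in>S. d x z \<le> d x y + d y z)"

definition graph_on :: "'a set \<Rightarrow> 'a set set \<Rightarrow> bool" where
  "graph_on S E \<longleftrightarrow> (\<forall>e\<in>E. \<exists>a b. e = {a, b} \<and> a \<in> S \<and> b \<in> S \<and> a \<noteq> b)"

definition walk :: "'a set \<Rightarrow> 'a set set \<Rightarrow> 'a list \<Rightarrow> bool" where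
  "walk S E xs \<longleftrightarrow> xs \<noteq> [] \<and> set xs \<subseteq> S \<and>
     (\<forall>i. Suc i < length xs \<longrightarrow> {xs ! i, xs ! Suc i} \<in> E)"

definition walk_between :: "'a set \<Rightarrow> 'a set set \<Rightarrow> 'a \<Rightarrow> 'a \<Rightarrow> 'a list \<Rightarrow> bool" where
  "walk_between S E p q xs \<longleftrightarrow> walk S E xs \<and> hd xs = p \<and> last xs = q"

definition walk_len :: "('a \<Rightarrow> 'a \<Rightarrow> real) \<Rightarrow> 'a list \<Rightarrow> real" where
  "walk_len d xs = (\<Sum>i<length xs - 1. d (xs ! i) (xs ! Suc i))"

text \<open>Shortest-path distance in the graph (S,E), infinite if no walk exists.\<close>
definition graph_dist :: "'a set \<Rightarrow> 'a set set \<Rightarrow> ('a \<Rightarrow> 'a \<Rightarrow> real) \<Rightarrow> 'a \<Rightarrow> 'a \<Rightarrow> ereal" where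
  "graph_dist S E d p q = Inf {ereal (walk_len d xs) | xs. walk_between S E p q xs}"

definition is_spanner :: "'a set \<Rightarrow> 'a set set \<Rightarrow> ('a \<Rightarrow> 'a \<Rightarrow> real) \<Rightarrow> real \<Rightarrow> bool" where
  "is_spanner S E d t \<longleftrightarrow> (\<forall>p\<in>S. \<forall>q\<in>S. graph_dist S E d p q \<le> ereal (t * d p q))"

definition shortest_path :: "'a set \<Rightarrow> 'a set set \<Rightarrow> ('a \<Rightarrow> 'a \<Rightarrow> real) \<Rightarrow> 'a \<Rightarrow> 'a \<Rightarrow> 'a list \<Rightarrow> bool" where
  "shortest_path S E d p q P \<longleftrightarrow> walk_between S E p q P \<and> distinct P \<and>
     ereal (walk_len d P) = graph_dist S E d p q"

text \<open>Construction with f = 1: c chooses, for each edge {a,b} of E', a point of S-{a,b}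
  minimising |ac|+|cb| (ties broken arbitrarily, i.e. any such choice).\<close>
definition valid_choice :: "'a set \<Rightarrow> ('a \<Rightarrow> 'a \<Rightarrow> real) \<Rightarrow> 'a set set \<Rightarrow> ('a set \<Rightarrow> 'a) \<Rightarrow> bool" where
  "valid_choice S d E' c \<longleftrightarrow> (\<forall>a b. {a, b} \<in> E' \<longrightarrow>
      c {a, b} \<in> S - {a, b} \<and>
      (\<forall>x\<in>S - {a, b}. d a (c {a, b}) + d (c {a, b}) b \<le> d a x + d x b))"

definition construct_f1 :: "'a set set \<Rightarrow> ('a set \<Rightarrow> 'a) \<Rightarrow> 'a set set" where
  "construct_f1 E' c = E' \<union> {{a, c {a, b}} | a b. {a, b} \<in> E'} \<union> {{c {a, b}, b} | a b. {a, b} \<in> E'}"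

definition is_matching :: "'a set set \<Rightarrow> bool" where
  "is_matching F \<longleftrightarrow> (\<forall>e1\<in>F. \<forall>e2\<in>F. e1 \<inter> e2 \<noteq> {} \<longrightarrow> e1 = e2)"

end

theory Submission
  imports Defs
begin

text \<open>Walk along P and keep every edge outside the matching F. A matched edge {a, b} is
  replaced by the two edges to its chosen point m = c {a, b}; these are not in F because F is a
  matching, and |am| + |mb| \<le> |ax| + |xb| for every other point x, in particular for the far
  end x of an adjacent (necessarily unmatched) edge of P. Charging the detour to that edge costs
  at most three times the two edges. The one configuration where an unmatched edge {x, y} would be
  charged from both sides is a path ending in matched-unmatched-matched; there the point chosen
  for {x, y} serves as a common detour point for both matched edges.\<close>

lemma walk_singleton [simp]: "walk S E [a] \<longleftrightarrow> a \<in> S"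
  unfolding walk_def by simp

lemma walk_len_singleton [simp]: "walk_len d [a] = 0"
  unfolding walk_len_def by simp

lemma walk_len_Cons_Cons [simp]: "walk_len d (a # b # xs) = d a b + walk_len d (b # xs)"
  unfolding walk_len_def by (simp add: sum.lessThan_Suc_shift del: sum.lessThan_Suc)

lemma walk_Cons_Cons [simp]:
  "walk S E (a # b # xs) \<longleftrightarrow> a \<in> S \<and> {a, b} \<in> E \<and> walk S E (b # xs)"
proof
  assume w: "walk S E (a # b # xs)"
  have "{(b # xs) ! i, (b # xs) ! Suc i} \<in> E" if "Suc i < length (b # xs)" for i
    using w that unfolding walk_def by (metis Suc_less_eq length_Cons nth_Cons_Suc)
  with w show "a \<in> S \<and> {a, b} \<in> E \<and> walk S E (b # xs)"
    unfolding walk_def by (metis insert_subset list.distinct(1) list.set(2) nth_Cons_0 nth_Cons_Suc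
      length_Cons zero_less_Suc Suc_less_eq)
next
  assume "a \<in> S \<and> {a, b} \<in> E \<and> walk S E (b # xs)"
  then show "walk S E (a # b # xs)"
    unfolding walk_def by (auto simp: less_Suc_eq_0_disj)
qed

lemma walk_append:
  assumes "walk S E xs" "walk S E ys" "last xs = hd ys"
  shows "walk S E (xs @ tl ys)"
  using assms
proof (induction xs rule: induct_list012)
  case (2 a)
  then show ?case by (cases ys) (auto simp: walk_def)
next
  case (3 a b xs)
  then show ?case by simp
qed (simp add: walk_def)

lemma walk_len_append:
  assumes "xs \<noteq> []" "ys \<noteq> []" "last xs = hd ys"
  shows "walk_len d (xs @ tl ys) = walk_len d xs + walk_len d ys"
  using assms
proof (induction xs rule: induct_list012)
  case (2 a)
  then show ?case by (cases ys) auto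
qed auto

locale matched_f1_spanner =
  fixes S :: "'a set" and d :: "'a \<Rightarrow> 'a \<Rightarrow> real"
    and E' F :: "'a set set" and c :: "'a set \<Rightarrow> 'a"
  assumes metric: "metric_on S d"
    and choice: "valid_choice S d E' c"
    and matching: "is_matching F"
begin

abbreviation G :: "'a set set" where
  "G \<equiv> construct_f1 E' c - F"

definition walk_within :: "'a \<Rightarrow> 'a \<Rightarrow> real \<Rightarrow> bool" where
  "walk_within a b L \<longleftrightarrow> (\<exists>W. walk_between S G a b W \<and> walk_len d W \<le> L)"

lemma d_nonneg: "x \<in> S \<Longrightarrow> y \<in> S \<Longrightarrow> 0 \<le> d x y"
  and d_commute: "x \<in> S \<Longrightarrow> y \<in> S \<Longrightarrow> d x y = d y x"
  and d_triangle: "x \<in> S \<Longrightarrow> y \<in> S \<Longrightarrow> z \<in> S \<Longrightarrow> d x z \<le> d x y + d y z"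
  using metric unfolding metric_on_def by blast+

lemma matching_unique: "e \<in> F \<Longrightarrow> e' \<in> F \<Longrightarrow> x \<in> e \<Longrightarrow> x \<in> e' \<Longrightarrow> e = e'"
  using matching unfolding is_matching_def by blast

lemma matching_adjacent_free:
  assumes "{a, b} \<in> F" "x \<noteq> a" "x \<noteq> b"
  shows "{b, x} \<notin> F"
proof
  assume "{b, x} \<in> F"
  then have "{b, x} = {a, b}"
    using assms(1) matching_unique[of "{b, x}" "{a, b}" b] by blast
  then show False
    using assms(2,3) by (simp add: doubleton_eq_iff)
qed

lemma walk_within_mono: "walk_within a b L \<Longrightarrow> L \<le> L' \<Longrightarrow> walk_within a b L'"
  unfolding walk_within_def by force

lemma walk_within_trans:
  assumes "walk_within a b L" "walk_within b z L'"
  shows "walk_within a z (L + L')"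
proof -
  obtain W W' where W: "walk_between S G a b W" "walk_len d W \<le> L"
    and W': "walk_between S G b z W'" "walk_len d W' \<le> L'"
    using assms unfolding walk_within_def by blast
  have ne: "W \<noteq> []" "W' \<noteq> []"
    using W(1) W'(1) unfolding walk_between_def walk_def by auto
  have "last (W @ tl W') = last W'"
    using W(1) W'(1) ne(2) unfolding walk_between_def by (cases W') auto
  then have "walk_between S G a z (W @ tl W')"
    using W(1) W'(1) ne walk_append[of S G W W'] unfolding walk_between_def by auto
  moreover have "walk_len d (W @ tl W') \<le> L + L'"
    using W W' ne walk_len_append unfolding walk_between_def by fastforce
  ultimately show ?thesis
    unfolding walk_within_def by blast
qed

lemma walk_within_free_edge:
  "{a, b} \<in> E' \<Longrightarrow> {a, b} \<notin> F \<Longrightarrow> a \<in> S \<Longrightarrow> b \<in> S \<Longrightarrow> walk_within a b (d a b)"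
  unfolding walk_within_def walk_between_def construct_f1_def
  by (intro exI[of _ "[a, b]"]) auto

lemma choice_detour:
  assumes "{a, b} \<in> E'"
  shows "c {a, b} \<in> S - {a, b}"
    and "x \<in> S - {a, b} \<Longrightarrow> d a (c {a, b}) + d (c {a, b}) b \<le> d a x + d x b"
  using choice assms unfolding valid_choice_def by blast+

lemma walk_within_matched_edge:
  assumes "{a, b} \<in> E'" "{a, b} \<in> F" "a \<in> S" "b \<in> S" "x \<in> S - {a, b}"
  shows "walk_within a b (d a x + d x b)"
proof -
  define m where "m = c {a, b}"
  have m: "m \<in> S - {a, b}" "d a m + d m b \<le> d a x + d x b"
    using choice_detour[OF assms(1)] assms(5) unfolding m_def by blast+
  have "{a, m} \<in> construct_f1 E' c" "{m, b} \<in> construct_f1 E' c"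
    using assms(1) unfolding m_def construct_f1_def by blast+
  moreover have "{a, m} \<notin> F" "{m, b} \<notin> F"
    using matching_adjacent_free[of b a m] matching_adjacent_free[OF assms(2), of m] m(1) assms(2)
    by (auto simp: insert_commute)
  ultimately have "walk_between S G a b [a, m, b]"
    using assms m(1) unfolding walk_between_def by auto
  with m(2) show ?thesis
    unfolding walk_within_def by (intro exI[of _ "[a, m, b]"]) auto
qed

lemma walk_within_matched_free:
  assumes "{a, b} \<in> E'" "{a, b} \<in> F" "{b, x} \<in> E'" "{b, x} \<notin> F"
    and "a \<in> S" "b \<in> S" "x \<in> S" "x \<noteq> a" "x \<noteq> b"
  shows "walk_within a x (3 * (d a b + d b x))"
proof -
  have "walk_within a x ((d a x + d x b) + d b x)"
    using walk_within_trans[OF walk_within_matched_edge[OF assms(1,2,5,6), of x]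
        walk_within_free_edge[OF assms(3,4,6,7)]] assms(7-9) by simp
  moreover have "d a x \<le> d a b + d b x" "d x b = d b x" "0 \<le> d a b" "0 \<le> d b x"
    using d_triangle d_commute d_nonneg assms by auto
  then have "(d a x + d x b) + d b x \<le> 3 * (d a b + d b x)"
    unfolding distrib_left by linarith
  ultimately show ?thesis
    by (rule walk_within_mono)
qed

lemma walk_within_free_matched:
  assumes "{a, b} \<in> E'" "{a, b} \<notin> F" "{b, x} \<in> E'" "{b, x} \<in> F"
    and "a \<in> S" "b \<in> S" "x \<in> S" "a \<noteq> b" "a \<noteq> x"
  shows "walk_within a x (3 * (d a b + d b x))"
proof -
  have "walk_within a x (d a b + (d b a + d a x))"
    using walk_within_trans[OF walk_within_free_edge[OF assms(1,2,5,6)]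
        walk_within_matched_edge[OF assms(3,4,6,7), of a]] assms(5,8,9) by simp
  moreover have "d a x \<le> d a b + d b x" "d b a = d a b" "0 \<le> d a b" "0 \<le> d b x"
    using d_triangle d_commute d_nonneg assms by auto
  then have "d a b + (d b a + d a x) \<le> 3 * (d a b + d b x)"
    unfolding distrib_left by linarith
  ultimately show ?thesis
    by (rule walk_within_mono)
qed

text \<open>Detouring both matched edges through their own chosen points could cost up to five
  times the free edge between them; the point chosen for the free edge is used instead.\<close>
lemma walk_within_matched_free_matched:
  assumes "{w, x} \<in> E'" "{w, x} \<in> F" "{x, y} \<in> E'" "{x, y} \<notin> F"
    and "{y, z} \<in> E'" "{y, z} \<in> F"
    and "w \<in> S" "x \<in> S" "y \<in> S" "z \<in> S" "distinct [w, x, y, z]"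
  shows "walk_within w z (3 * (d w x + d x y + d y z))"
proof -
  define u where "u = c {x, y}"
  have u: "u \<in> S - {x, y}" "\<And>v. v \<in> S - {x, y} \<Longrightarrow> d x u + d u y \<le> d x v + d v y"
    using choice_detour[OF assms(3)] unfolding u_def by blast+
  have u_edges: "{x, u} \<in> construct_f1 E' c" "{u, y} \<in> construct_f1 E' c"
    using assms(3) unfolding u_def construct_f1_def by blast+
  have tri: "d w y \<le> d w x + d x y" "d x z \<le> d x y + d y z"
    using d_triangle assms by auto
  have sym: "d y x = d x y" "d x w = d w x" "d z y = d y z"
    using d_commute assms by auto
  have pos: "0 \<le> d w x" "0 \<le> d x y" "0 \<le> d y z"
    using d_nonneg assms by auto
  note arith = tri sym pos
  consider (at_w) "u = w" | (at_z) "u = z" | (elsewhere) "u \<notin> {w, z}"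
    by blast
  then show ?thesis
  proof cases
    case at_w
    have "{w, y} \<notin> F"
      using matching_adjacent_free[of x w y] assms by (auto simp: insert_commute)
    then have "walk_within w y (d w y)"
      using u_edges(2) at_w assms(7,9) unfolding walk_within_def walk_between_def
      by (intro exI[of _ "[w, y]"]) auto
    then have "walk_within w z (d w y + (d y x + d x z))"
      using walk_within_trans walk_within_matched_edge[OF assms(5,6,9,10), of x] assms(8,11) by simp
    moreover have "d w y + (d y x + d x z) \<le> 3 * (d w x + d x y + d y z)"
      unfolding distrib_left using arith by linarith
    ultimately show ?thesis
      by (rule walk_within_mono)
  next
    case at_z
    have "{x, z} \<notin> F"
      using matching_adjacent_free[of y z x] assms by (auto simp: insert_commute)
    then have "walk_within x z (d x z)"
      using u_edges(1) at_z assms(8,10) unfolding walk_within_def walk_between_def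
      by (intro exI[of _ "[x, z]"]) auto
    then have "walk_within w z ((d w y + d y x) + d x z)"
      using walk_within_trans[OF walk_within_matched_edge[OF assms(1,2,7,8), of y]] assms(9,11)
      by auto
    moreover have "(d w y + d y x) + d x z \<le> 3 * (d w x + d x y + d y z)"
      unfolding distrib_left using arith by linarith
    ultimately show ?thesis
      by (rule walk_within_mono)
  next
    case elsewhere
    have W: "walk_within w z ((d w u + d u x) + d x y + (d y u + d u z))"
      using walk_within_trans[OF walk_within_trans[OF
            walk_within_matched_edge[OF assms(1,2,7,8), of u]
            walk_within_free_edge[OF assms(3,4,8,9)]]
          walk_within_matched_edge[OF assms(5,6,9,10), of u]] u(1) elsewhere by simp
    moreover have "d x u + d u y \<le> d x w + d w y" "d x u + d u y \<le> d x z + d z y"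
      using u(2) assms by auto
    moreover have "d w u \<le> d w x + d x u" "d u z \<le> d u y + d y z" "d u x = d x u" "d y u = d u y"
      using d_triangle[of w x u] d_triangle[of u y z] d_commute[of u x] d_commute[of y u]
        assms(7-10) u(1) by auto
    ultimately have "(d w u + d u x) + d x y + (d y u + d u z) \<le> 3 * (d w x + d x y + d y z)"
      unfolding distrib_left using arith by linarith
    with W show ?thesis
      by (rule walk_within_mono)
  qed
qed

text \<open>The paths that can be rerouted: a single matched edge cannot, since its detour is not
  comparable to its own length.\<close>
definition reroutable :: "'a list \<Rightarrow> bool" where
  "reroutable P \<longleftrightarrow>
     walk S E' P \<and> distinct P \<and> 2 \<le> length P \<and> \<not> (length P = 2 \<and> {hd P, last P} \<in> F)"

lemma reroutable_Cons_Cons: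
  "reroutable (a # b # Q) \<longleftrightarrow> a \<in> S \<and> {a, b} \<in> E' \<and> a \<notin> set (b # Q) \<and>
     walk S E' (b # Q) \<and> distinct (b # Q) \<and> (Q = [] \<longrightarrow> {a, b} \<notin> F)"
  unfolding reroutable_def by auto

lemma reroutable_free_head:
  assumes P: "reroutable (a # b # Q)" and free: "{a, b} \<notin> F"
    and IH: "reroutable (b # Q) \<Longrightarrow> walk_within b (last (b # Q)) (3 * walk_len d (b # Q))"
  shows "walk_within a (last (b # Q)) (3 * walk_len d (a # b # Q))"
proof -
  have ab: "{a, b} \<in> E'" "a \<in> S" "b \<in> S" "a \<notin> set (b # Q)"
    and walk_b: "walk S E' (b # Q)" "distinct (b # Q)"
    using P unfolding reroutable_Cons_Cons by (auto simp: walk_def)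
  note head = walk_within_free_edge[OF ab(1) free ab(2,3)]
  consider (edge) "Q = []" | (last_matched) x where "Q = [x]" "{b, x} \<in> F"
    | (tail) "reroutable (b # Q)"
    using walk_b unfolding reroutable_def by (cases Q) auto
  then show ?thesis
  proof cases
    case edge
    with head show ?thesis
      by (auto elim: walk_within_mono simp: d_nonneg ab)
  next
    case last_matched
    then have "{b, x} \<in> E'" "x \<in> S" "a \<noteq> x"
      using walk_b ab(4) by (auto simp: walk_def)
    then show ?thesis
      using walk_within_free_matched[OF ab(1) free _ last_matched(2) ab(2,3)] ab(4) last_matched(1)
      by simp
  next
    case tail
    have "walk_within a (last (b # Q)) (d a b + 3 * walk_len d (b # Q))"
      using walk_within_trans[OF head IH[OF tail]] .
    then show ?thesis
      by (rule walk_within_mono) (simp add: d_nonneg ab)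
  qed
qed

lemma reroutable_matched_head:
  assumes P: "reroutable (a # b # x # R)" and matched: "{a, b} \<in> F"
    and IH: "reroutable (x # R) \<Longrightarrow> walk_within x (last (x # R)) (3 * walk_len d (x # R))"
  shows "walk_within a (last (x # R)) (3 * walk_len d (a # b # x # R))"
proof -
  have ab: "{a, b} \<in> E'" "a \<in> S" "b \<in> S" and bx: "{b, x} \<in> E'" "x \<in> S"
    and walk_x: "walk S E' (x # R)" "distinct (x # R)" and dist: "distinct (a # b # x # R)"
    using P unfolding reroutable_Cons_Cons by (auto simp: walk_def)
  have x: "x \<noteq> a" "x \<noteq> b"
    using dist by auto
  have bx_free: "{b, x} \<notin> F"
    using matching_adjacent_free[OF matched x] .
  note head = walk_within_matched_free[OF ab(1) matched bx(1) bx_free ab(2,3) bx(2) x]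
  consider (two) "R = []" | (last_matched) y where "R = [y]" "{x, y} \<in> F"
    | (tail) "reroutable (x # R)"
    using walk_x unfolding reroutable_def by (cases R) auto
  then show ?thesis
  proof cases
    case two
    with head dist show ?thesis
      by simp
  next
    case last_matched
    then have "{x, y} \<in> E'" "y \<in> S"
      using walk_x by (auto simp: walk_def)
    then show ?thesis
      using walk_within_matched_free_matched[of a b x y] ab bx bx_free matched dist last_matched
      by (simp add: add.assoc)
  next
    case tail
    show ?thesis
      using walk_within_trans[OF head IH[OF tail]] by (simp add: distrib_left add.assoc)
  qed
qed

lemma reroutable_walk_within:
  assumes "reroutable P"
  shows "walk_within (hd P) (last P) (3 * walk_len d P)"
  using assms
proof (induction P rule: length_induct)
  case (1 P)
  then obtain a b Q where P: "P = a # b # Q"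
    unfolding reroutable_def by (metis One_nat_def Suc_1 Suc_le_length_iff)
  have IH: "reroutable Q' \<Longrightarrow> walk_within (hd Q') (last Q') (3 * walk_len d Q')"
    if "length Q' < length P" for Q'
    using "1.IH" that by blast
  show ?case
  proof (cases "{a, b} \<in> F")
    case False
    have "walk_within a (last (b # Q)) (3 * walk_len d P)"
      unfolding P
      by (rule reroutable_free_head[OF "1.prems"[unfolded P] False]) (use IH[of "b # Q"] P in simp)
    then show ?thesis
      by (simp add: P)
  next
    case True
    then obtain x R where Q: "Q = x # R"
      using "1.prems" unfolding P reroutable_Cons_Cons by (cases Q) auto
    have "walk_within a (last (x # R)) (3 * walk_len d P)"
      unfolding P Q
      by (rule reroutable_matched_head[OF "1.prems"[unfolded P Q] True])
        (use IH[of "x # R"] P Q in simp)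
    then show ?thesis
      by (simp add: P Q)
  qed
qed

end

theorem lemma1:
  fixes S :: "'a set" and d :: "'a \<Rightarrow> 'a \<Rightarrow> real" and t :: real
    and E' F :: "'a set set" and c :: "'a set \<Rightarrow> 'a" and p q :: 'a and P :: "'a list"
  assumes "finite S" and "card S \<ge> 3" and "metric_on S d" and "t \<ge> 1"
    and "graph_on S E'" and "is_spanner S E' d t"
    and "valid_choice S d E' c"
    and "F \<subseteq> construct_f1 E' c" and "is_matching F"
    and "p \<in> S" and "q \<in> S"
    and "shortest_path S E' d p q P"
    and "\<exists>i. Suc i < length P \<and> {P ! i, P ! Suc i} \<in> F"
    and "length P \<ge> 3"
  shows "\<exists>W. walk_between S (construct_f1 E' c - F) p q W \<and> walk_len d W \<le> 3 * walk_len d P"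
proof -
  interpret matched_f1_spanner S d E' F c
    using assms(3,7,9) by unfold_locales
  \<comment> \<open>Only that P is a path with at least two edges matters.\<close>
  have P: "walk S E' P" "distinct P" "hd P = p" "last P = q"
    using assms(12) unfolding shortest_path_def walk_between_def by auto
  then have "reroutable P"
    using assms(14) unfolding reroutable_def by auto
  then have "walk_within p q (3 * walk_len d P)"
    using reroutable_walk_within P(3,4) by blast
  then show ?thesis
    unfolding walk_within_def .
qed

end
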